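(* Let $p,n$ be positive integers with $\gcd(p,n)=1$, and $y\in\mathbb{Z}_n$. Then the full pointed quandle coloring quiver $\mathcal{Q}_{(\mathbb{Z}_n,y,y)}(\widetilde{\mathcal{T}(p,2)})$ is isomorphic to $K_{1,n}$, i.e. it has a single vertex (the trivial coloring) carrying $n$ loops.
   Context: $\mathbb{Z}_n$ is the dihedral quandle ($x\triangleright y=2y-x$ mod $n$) and $(\mathbb{Z}_n,y,y)$ the $2$-pointed quandle with both basepoints $y$. $P(\widetilde{\mathcal{T}(p,2)})=(Q,x_1,x_{p+1})$ with $Q=\langle x_1,\dots,x_{p+1}\mid x_p=x_2\triangleright x_{p+1},\ x_i=x_{i+2}\triangleright x_{i+1}\ (1\le i\le p-1)\rangle$, the fundamental pointed quandle of the $1$-linkoid of $(p,2)$-torus type. For a pointed quandle $\mathcal{X}$, the full pointed quandle coloring quiver $\mathcal{Q}_{\mathcal{X}}(L)$ is the directed multigraph with vertex set $\hom(P(L),\mathcal{X})$ (basepoint-preserving homomorphisms) and, for vertices $\alpha,\beta$, $|\{\varphi\in\operatorname{End}(\mathcal{X}):\varphi\circ\alpha=\beta\}|$ arcs from $\alpha$ to $\beta$, where $\operatorname{End}(\mathcal{X})$ is the set of pointed endomorphisms. $K_{m,k}$ denotes the directed multigraph on vertex set $\{1,\dots,m\}$ with exactly $k$ arcs from $u$ to $v$ for every ordered pair $(u,v)$ (including $u=v$). *)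

theory Defs
  imports "HOL-Library.FuncSet"
begin

definition dih_op :: "nat \<Rightarrow> int \<Rightarrow> int \<Rightarrow> int" where
  "dih_op n a b = (2 * b - a) mod int n"

definition dih_carrier :: "nat \<Rightarrow> int set" where
  "dih_carrier n = {0..<int n}"

text \<open>Basepoint-preserving homomorphisms from the fundamental pointed quandle
  P(T(p,2)~) = (Q, x_1, x_{p+1}) to (Z_n, y, y).  By the universal property of the
  presentation, such a homomorphism is the same as an assignment of the generators
  x_1..x_{p+1} (a function on indices {1..p+1}) satisfying the defining relations,
  with x_1 sent to y and x_{p+1} sent to y.\<close>
definition torus_colorings :: "nat \<Rightarrow> nat \<Rightarrow> int \<Rightarrow> (nat \<Rightarrow> int) set" where
  "torus_colorings p n y =
     {c \<in> extensional {1..p+1}.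
        (\<forall>i\<in>{1..p+1}. c i \<in> dih_carrier n) \<and>
        c p = dih_op n (c 2) (c (p+1)) \<and>
        (\<forall>i. 1 \<le> i \<and> i \<le> p - 1 \<longrightarrow> c i = dih_op n (c (i+2)) (c (i+1))) \<and>
        c 1 = y \<and> c (p+1) = y}"

definition pointed_dih_End :: "nat \<Rightarrow> int \<Rightarrow> (int \<Rightarrow> int) set" where
  "pointed_dih_End n y =
     {\<phi> \<in> extensional (dih_carrier n).
        \<phi> ` dih_carrier n \<subseteq> dih_carrier n \<and>
        (\<forall>a\<in>dih_carrier n. \<forall>b\<in>dih_carrier n. \<phi> (dih_op n a b) = dih_op n (\<phi> a) (\<phi> b)) \<and>
        \<phi> y = y}"

text \<open>A directed multigraph: a vertex set together with the number of arcs
  from u to v.\<close>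
type_synonym 'v multigraph = "'v set \<times> ('v \<Rightarrow> 'v \<Rightarrow> nat)"

definition multigraph_iso :: "'v multigraph \<Rightarrow> 'w multigraph \<Rightarrow> bool" where
  "multigraph_iso G H \<longleftrightarrow>
     (\<exists>f. bij_betw f (fst G) (fst H) \<and>
          (\<forall>u\<in>fst G. \<forall>v\<in>fst G. snd G u v = snd H (f u) (f v)))"

text \<open>K_{m,k}: vertices {1..m}, exactly k arcs from u to v for every ordered pair.\<close>
definition K_multigraph :: "nat \<Rightarrow> nat \<Rightarrow> nat multigraph" where
  "K_multigraph m k = ({1..m}, \<lambda>u v. k)"

definition torus_full_quiver :: "nat \<Rightarrow> nat \<Rightarrow> int \<Rightarrow> (nat \<Rightarrow> int) multigraph" where
  "torus_full_quiver p n y =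
     (torus_colorings p n y,
      \<lambda>\<alpha> \<beta>. card {\<phi> \<in> pointed_dih_End n y. restrict (\<phi> \<circ> \<alpha>) {1..p+1} = \<beta>})"

end

theory Submission
  imports Defs "HOL-Number_Theory.Cong"
begin

text \<open>The relations \<open>x(i) = x(i+2) \<triangleright> x(i+1)\<close> say \<open>c(i) + c(i+2) \<equiv> 2 c(i+1)\<close> mod \<open>n\<close>,
  so a coloring is an arithmetic progression \<open>c(k+1) \<equiv> y + k d\<close>. Both endpoints being \<open>y\<close>
  forces \<open>p d \<equiv> 0\<close>, hence \<open>d \<equiv> 0\<close> as \<open>p\<close> is prime to \<open>n\<close>: the only coloring is the
  trivial one. For the same reason a quandle endomorphism fixing \<open>y\<close> maps \<open>y + k\<close> to
  \<open>y + k a\<close>, so the pointed endomorphisms are the \<open>n\<close> affine maps \<open>x \<mapsto> y + a (x - y)\<close>,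
  and each of them fixes the trivial coloring.\<close>

lemma dih_carrier_mod_eq: "x \<in> dih_carrier n \<Longrightarrow> x mod int n = x"
  by (simp add: dih_carrier_def)

lemma mod_in_dih_carrier: "0 < n \<Longrightarrow> x mod int n \<in> dih_carrier n"
  by (simp add: dih_carrier_def)

lemma dih_carrier_cong_imp_eq:
  "x \<in> dih_carrier n \<Longrightarrow> x' \<in> dih_carrier n \<Longrightarrow> [x = x'] (mod int n) \<Longrightarrow> x = x'"
  by (simp add: cong_def dih_carrier_mod_eq)

lemma dih_op_cong: "[dih_op n a b = 2 * b - a] (mod int n)"
  by (simp add: dih_op_def)

lemma dih_op_idem: "y \<in> dih_carrier n \<Longrightarrow> dih_op n y y = y"
  by (simp add: dih_op_def dih_carrier_mod_eq)

lemma dih_op_mod: "dih_op n (a mod int n) (b mod int n) = dih_op n a b"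
  unfolding dih_op_def cong_def[symmetric] by (intro cong_diff cong_scalar_left) simp_all

lemma cong_arith_progression:
  fixes f :: "nat \<Rightarrow> int"
  assumes "\<And>k. k + 2 \<le> N \<Longrightarrow> [f k = 2 * f (k + 1) - f (k + 2)] (mod m)"
  shows "k \<le> N \<Longrightarrow> [f k = f 0 + int k * (f 1 - f 0)] (mod m)"
proof (induction k rule: induct_nat_012)
  case (ge2 j)
  then have "[2 * f (j + 1) - f j = 2 * f (j + 1) - (2 * f (j + 1) - f (j + 2))] (mod m)"
    using assms[of j] by (intro cong_diff cong_refl) simp
  then have "[f (j + 2) = 2 * f (j + 1) - f j] (mod m)"
    by (simp add: cong_sym_eq)
  also have "[2 * f (j + 1) - f j =
      2 * (f 0 + int (j + 1) * (f 1 - f 0)) - (f 0 + int j * (f 1 - f 0))] (mod m)"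
    using ge2 by (intro cong_diff cong_scalar_left) simp_all
  finally show ?case
    by (simp add: algebra_simps)
qed simp_all

lemma torus_coloring_cong_progression:
  assumes c: "c \<in> torus_colorings p n y" and "k \<le> p"
  shows "[c (k + 1) = y + int k * (c 2 - y)] (mod int n)"
proof -
  have "[c (k + 1) = 2 * c (k + 2) - c (k + 3)] (mod int n)" if "k + 2 \<le> p" for k
  proof -
    have "\<forall>i. 1 \<le> i \<and> i \<le> p - 1 \<longrightarrow> c i = dih_op n (c (i + 2)) (c (i + 1))"
      using c unfolding torus_colorings_def by blast
    then have "c (k + 1) = dih_op n (c (k + 1 + 2)) (c (k + 1 + 1))"
      using that by simp
    then have "c (k + 1) = dih_op n (c (k + 3)) (c (k + 2))"
      by (simp only: add.assoc numeral_plus_one one_plus_numeral semiring_norm)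
    then show ?thesis
      by (simp add: dih_op_cong)
  qed
  moreover have "c 1 = y"
    using c unfolding torus_colorings_def by blast
  ultimately show ?thesis
    using cong_arith_progression[of p "\<lambda>k. c (k + 1)" "int n" k] \<open>k \<le> p\<close>
    by (simp add: add.assoc numeral_3_eq_3 numeral_2_eq_2)
qed

lemma torus_colorings_eq_trivial:
  assumes "0 < p" and "coprime p n" and y: "y \<in> dih_carrier n"
  shows "torus_colorings p n y = {restrict (\<lambda>_. y) {1..p + 1}}"
proof
  show "torus_colorings p n y \<subseteq> {restrict (\<lambda>_. y) {1..p + 1}}"
  proof
    fix c assume c: "c \<in> torus_colorings p n y"
    have "[y = y + int p * (c 2 - y)] (mod int n)"
      using torus_coloring_cong_progression[OF c, of p] c
      unfolding torus_colorings_def by simp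
    then have "[int p * (c 2 - y) = 0] (mod int n)"
      by (metis add.right_neutral cong_add_lcancel cong_sym)
    then have difference_cong_0: "[c 2 - y = 0] (mod int n)"
      using \<open>coprime p n\<close> by (metis cong_mult_lcancel coprime_int_iff mult_zero_right)
    have "c i = y" if "i \<in> {1..p + 1}" for i
    proof -
      have "[c i = y + int (i - 1) * (c 2 - y)] (mod int n)"
        using torus_coloring_cong_progression[OF c, of "i - 1"] that by auto
      also have "[y + int (i - 1) * (c 2 - y) = y] (mod int n)"
        using difference_cong_0 by (metis add.right_neutral cong_add_lcancel cong_scalar_left mult_zero_right)
      finally show ?thesis
        using c that y unfolding torus_colorings_def by (blast intro: dih_carrier_cong_imp_eq)
    qed
    moreover have "c \<in> extensional {1..p + 1}"
      using c unfolding torus_colorings_def by blast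
    ultimately show "c \<in> {restrict (\<lambda>_. y) {1..p + 1}}"
      by (auto intro: extensionalityI)
  qed
  show "{restrict (\<lambda>_. y) {1..p + 1}} \<subseteq> torus_colorings p n y"
    using \<open>0 < p\<close> y by (auto simp: torus_colorings_def dih_op_idem)
qed

definition dih_affine :: "nat \<Rightarrow> int \<Rightarrow> int \<Rightarrow> int \<Rightarrow> int" where
  "dih_affine n y a = restrict (\<lambda>x. (y + a * (x - y)) mod int n) (dih_carrier n)"

lemma dih_affine_mod:
  assumes "0 < n"
  shows "dih_affine n y a (x mod int n) = (y + a * (x - y)) mod int n"
proof -
  have "[y + a * (x mod int n - y) = y + a * (x - y)] (mod int n)"
    by (intro cong_add cong_scalar_left cong_diff cong_refl) simp
  then show ?thesis
    using assms by (simp add: dih_affine_def mod_in_dih_carrier cong_def)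
qed

lemma dih_affine_in_pointed_End:
  assumes "0 < n" and y: "y \<in> dih_carrier n"
  shows "dih_affine n y a \<in> pointed_dih_End n y"
proof -
  have "dih_affine n y a (dih_op n u v) = dih_op n (dih_affine n y a u) (dih_affine n y a v)"
    if u: "u \<in> dih_carrier n" and v: "v \<in> dih_carrier n" for u v
  proof -
    have "dih_affine n y a (dih_op n u v) = (y + a * ((2 * v - u) - y)) mod int n"
      unfolding dih_op_def using assms(1) by (rule dih_affine_mod)
    also have "\<dots> = dih_op n (y + a * (u - y)) (y + a * (v - y))"
      by (simp add: dih_op_def algebra_simps)
    also have "\<dots> = dih_op n ((y + a * (u - y)) mod int n) ((y + a * (v - y)) mod int n)"
      by (rule dih_op_mod[symmetric])
    also have "\<dots> = dih_op n (dih_affine n y a u) (dih_affine n y a v)"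
      using u v by (simp add: dih_affine_def)
    finally show ?thesis .
  qed
  then show ?thesis
    using assms dih_affine_mod[OF assms(1), of y a y]
    by (auto simp: pointed_dih_End_def dih_affine_def mod_in_dih_carrier dih_carrier_mod_eq)
qed

lemma pointed_dih_End_eq_dih_affine:
  assumes "0 < n" and y: "y \<in> dih_carrier n" and \<phi>: "\<phi> \<in> pointed_dih_End n y"
  shows "\<phi> = dih_affine n y ((\<phi> ((y + 1) mod int n) - y) mod int n)"
proof -
  define f where "f k = \<phi> ((y + int k) mod int n)" for k
  note \<phi>_End = \<phi>[unfolded pointed_dih_End_def, simplified]
  have hom: "\<phi> (dih_op n u v) = dih_op n (\<phi> u) (\<phi> v)"
    if "u \<in> dih_carrier n" "v \<in> dih_carrier n" for u v
    using \<phi>_End that by blast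
  have \<phi>_carrier: "\<phi> x \<in> dih_carrier n" if "x \<in> dih_carrier n" for x
    using \<phi>_End that by blast
  have "\<phi> y = y"
    using \<phi>_End by blast
  have "[f k = 2 * f (k + 1) - f (k + 2)] (mod int n)" for k
  proof -
    have "dih_op n ((y + int (k + 2)) mod int n) ((y + int (k + 1)) mod int n) = (y + int k) mod int n"
      unfolding dih_op_mod by (simp add: dih_op_def algebra_simps)
    then have "f k = \<phi> (dih_op n ((y + int (k + 2)) mod int n) ((y + int (k + 1)) mod int n))"
      by (simp add: f_def)
    also have "\<dots> = dih_op n (f (k + 2)) (f (k + 1))"
      unfolding f_def using \<open>0 < n\<close> by (intro hom mod_in_dih_carrier)
    finally show ?thesis
      by (simp add: dih_op_cong)
  qed
  then have progression: "[f k = y + int k * (\<phi> ((y + 1) mod int n) - y)] (mod int n)" for k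
    using cong_arith_progression[of k f "int n" k] \<open>\<phi> y = y\<close> y by (simp add: f_def dih_carrier_mod_eq)
  show ?thesis
  proof (rule extensionalityI)
    show "\<phi> \<in> extensional (dih_carrier n)"
      using \<phi>_End by blast
    show "dih_affine n y ((\<phi> ((y + 1) mod int n) - y) mod int n) \<in> extensional (dih_carrier n)"
      by (simp add: dih_affine_def)
    fix x assume x: "x \<in> dih_carrier n"
    define k where "k = nat ((x - y) mod int n)"
    have k: "int k = (x - y) mod int n"
      unfolding k_def using \<open>0 < n\<close> by simp
    have "(y + int k) mod int n = x"
      using x by (simp add: k mod_simps dih_carrier_mod_eq)
    then have "[\<phi> x = y + int k * (\<phi> ((y + 1) mod int n) - y)] (mod int n)"
      using progression[of k] by (simp add: f_def)
    also have "[y + int k * (\<phi> ((y + 1) mod int n) - y) =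
        y + (\<phi> ((y + 1) mod int n) - y) mod int n * (x - y)] (mod int n)"
      unfolding k mult.commute[of "(x - y) mod int n"]
      by (intro cong_add cong_mult cong_refl) (simp_all add: cong_sym_eq)
    finally show "\<phi> x = dih_affine n y ((\<phi> ((y + 1) mod int n) - y) mod int n) x"
      using x \<phi>_carrier[OF x] \<open>0 < n\<close>
      by (auto simp: dih_affine_def cong_sym_eq intro: dih_carrier_cong_imp_eq mod_in_dih_carrier)
  qed
qed

lemma inj_on_dih_affine:
  assumes "0 < n"
  shows "inj_on (dih_affine n y) {0..<int n}"
proof (rule inj_onI)
  fix a b assume a: "a \<in> {0..<int n}" and b: "b \<in> {0..<int n}"
    and eq: "dih_affine n y a = dih_affine n y b"
  have "[y + a = y + b] (mod int n)"
    using fun_cong[OF eq, of "(y + 1) mod int n"] by (simp add: dih_affine_mod[OF assms] cong_def)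
  then show "a = b"
    using a b cong_less_imp_eq_int[of a "int n" b] by (simp add: cong_add_lcancel)
qed

lemma pointed_dih_End_eq_image_dih_affine:
  assumes "0 < n" and "y \<in> dih_carrier n"
  shows "pointed_dih_End n y = dih_affine n y ` {0..<int n}"
proof
  show "pointed_dih_End n y \<subseteq> dih_affine n y ` {0..<int n}"
  proof
    fix \<phi> assume "\<phi> \<in> pointed_dih_End n y"
    moreover have "(\<phi> ((y + 1) mod int n) - y) mod int n \<in> {0..<int n}"
      using \<open>0 < n\<close> by simp
    ultimately show "\<phi> \<in> dih_affine n y ` {0..<int n}"
      using pointed_dih_End_eq_dih_affine[OF assms] by blast
  qed
  show "dih_affine n y ` {0..<int n} \<subseteq> pointed_dih_End n y"
    using dih_affine_in_pointed_End[OF assms] by blast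
qed

lemma card_pointed_dih_End:
  assumes "0 < n" and "y \<in> dih_carrier n"
  shows "card (pointed_dih_End n y) = n"
  using card_image[OF inj_on_dih_affine[OF \<open>0 < n\<close>, of y]]
  by (simp add: pointed_dih_End_eq_image_dih_affine[OF assms])

lemma pointed_dih_End_fixes_trivial_coloring:
  "\<phi> \<in> pointed_dih_End n y \<Longrightarrow> restrict (\<phi> \<circ> restrict (\<lambda>_. y) A) A = restrict (\<lambda>_. y) A"
  by (auto simp: pointed_dih_End_def)

theorem theorem6p13:
  fixes p n :: nat and y :: int
  assumes "0 < p" and "0 < n" and "gcd p n = 1" and "y \<in> dih_carrier n"
  shows "multigraph_iso (torus_full_quiver p n y) (K_multigraph 1 n)"
proof -
  let ?trivial = "restrict (\<lambda>_. y) {1..p + 1}"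
  have vertices: "torus_colorings p n y = {?trivial}"
    using assms by (simp add: torus_colorings_eq_trivial coprime_iff_gcd_eq_1)
  have "{\<phi> \<in> pointed_dih_End n y. restrict (\<phi> \<circ> ?trivial) {1..p + 1} = ?trivial} =
      pointed_dih_End n y"
    using pointed_dih_End_fixes_trivial_coloring by blast
  then have "card {\<phi> \<in> pointed_dih_End n y. restrict (\<phi> \<circ> ?trivial) {1..p + 1} = ?trivial} = n"
    using card_pointed_dih_End[OF assms(2,4)] by simp
  then show ?thesis
    unfolding multigraph_iso_def torus_full_quiver_def K_multigraph_def vertices
    by (intro exI[of _ "\<lambda>_. 1"]) (simp add: bij_betw_def)
qed

end
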